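(* Let $\lambda=(\lambda_1,\dots,\lambda_d)$ be a partition of $n\ge2$. For distinct $i,j\in\{0,\dots,n-2\}$, we have $i\preceq j$ in $P(\lambda)$ if and only if $i<j$ and for each $t\in\{1,\dots,d\}$ one of the following holds: (1) $s_{t,i}>s_{t,j}>0$; (2) $s_{t,i}=0$ and $s_{t,j}=s_{t,j-i}$; (3) $s_{t,j}=s_{t,i}>0$ and $s_{t,j-i}=0$.
   Context: $\Delta_\lambda=\mathrm{conv}(e_1,\dots,e_d,\lambda)\subset\mathbb{R}^d$, with fundamental parallelepiped $\Pi_\lambda=\{\sum_{i=1}^d\gamma_i(1,e_i)+\gamma_{d+1}(1,\lambda):0\le\gamma_i<1\}\subset\mathbb{R}^{d+1}$. $P(\lambda)$ is $\Pi_\lambda\cap\mathbb{Z}^{d+1}$ ordered by $\sigma\preceq\mu$ iff $\mu-\sigma\in\Pi_\lambda\cap\mathbb{Z}^{d+1}$. For $0\le b<n-1$ set $p(b)=\left(\sum_{t}\lceil b\lambda_t/(n-1)\rceil-b,\ \lceil b\lambda_1/(n-1)\rceil,\dots,\lceil b\lambda_d/(n-1)\rceil\right)$; $b\mapsto p(b)$ is a bijection from $\{0,\dots,n-2\}$ onto $\Pi_\lambda\cap\mathbb{Z}^{d+1}$ and each integer $b$ is identified with $p(b)$. For $0\le i<n-1$ and $1\le t\le d$, the integers $r_{t,i}\ge0$ and $0\le s_{t,i}<n-1$ are defined by $i\lambda_t=r_{t,i}(n-1)+s_{t,i}$. *)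

theory Defs
  imports Complex_Main
begin

text \<open>A partition lambda = (lambda_1,...,lambda_d) is a list lam of length d;
  lambda_t = lam ! (t-1) for 1 <= t <= d.  Points of R^(d+1) are represented as
  functions nat => real with coordinates indexed 0..d (coordinate 0 is the
  first coordinate), and value 0 outside {0..d}.\<close>

definition is_partition :: "nat list \<Rightarrow> nat \<Rightarrow> bool" where
  "is_partition lam n \<longleftrightarrow> sorted (rev lam) \<and> (\<forall>x\<in>set lam. 0 < x) \<and> sum_list lam = n"

definition gen_e :: "nat \<Rightarrow> nat \<Rightarrow> real" where
  "gen_e i k = (if k = 0 then 1 else if k = i then 1 else 0)"

definition gen_lam :: "nat list \<Rightarrow> nat \<Rightarrow> real" where
  "gen_lam lam k = (if k = 0 then 1 else if k \<le> length lam then real (lam ! (k - 1)) else 0)"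

definition fund_pp :: "nat list \<Rightarrow> (nat \<Rightarrow> real) set" where
  "fund_pp lam = {x. \<exists>\<gamma>::nat \<Rightarrow> real.
      (\<forall>i\<in>{1..length lam + 1}. 0 \<le> \<gamma> i \<and> \<gamma> i < 1) \<and>
      x = (\<lambda>k. (\<Sum>i=1..length lam. \<gamma> i * gen_e i k) + \<gamma> (length lam + 1) * gen_lam lam k)}"

definition fund_pp_lattice :: "nat list \<Rightarrow> (nat \<Rightarrow> real) set" where
  "fund_pp_lattice lam = {x \<in> fund_pp lam. \<forall>k. x k \<in> \<int>}"

definition P_le :: "nat list \<Rightarrow> (nat \<Rightarrow> real) \<Rightarrow> (nat \<Rightarrow> real) \<Rightarrow> bool" where
  "P_le lam \<sigma> \<mu> \<longleftrightarrow> \<sigma> \<in> fund_pp_lattice lam \<and> \<mu> \<in> fund_pp_lattice lam \<and>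
      (\<lambda>k. \<mu> k - \<sigma> k) \<in> fund_pp_lattice lam"

definition p_pt :: "nat list \<Rightarrow> nat \<Rightarrow> nat \<Rightarrow> real" where
  "p_pt lam b k = (let n = sum_list lam in
     if k = 0 then (\<Sum>t=1..length lam. real_of_int \<lceil>real b * real (lam ! (t-1)) / real (n - 1)\<rceil>) - real b
     else if k \<le> length lam then real_of_int \<lceil>real b * real (lam ! (k-1)) / real (n - 1)\<rceil>
     else 0)"

definition s_rem :: "nat list \<Rightarrow> nat \<Rightarrow> nat \<Rightarrow> nat" where
  "s_rem lam t i = (i * (lam ! (t-1))) mod (sum_list lam - 1)"

end

theory Submission
  imports Defs
begin

text \<open>A point x of Pi_lambda is determined by the coefficient c in [0,1) of (1, lambda): the
  coefficient of (1, e_t) is x_t - c lambda_t, and x_0 = sum_t x_t - c (n - 1).  At a lattice point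
  this forces x_t = ceiling (c lambda_t) and c (n - 1) = b integral, so the lattice points are exactly
  the p(b).  Thus i precedes j iff p(j) - p(i) = p(b) for some b; coordinate 0 forces b = j - i, and
  coordinate t then asks for additivity of ceiling (x lambda_t / (n - 1)) on j = i + (j - i), which
  a carry argument on the remainders s_{t,i}, s_{t,j - i}, s_{t,j} turns into conditions (1)-(3).\<close>

lemma ceiling_of_nat_divide:
  assumes "m > 0"
  shows "\<lceil>real a / real m\<rceil> = int (a div m) + of_bool (a mod m \<noteq> 0)"
proof (rule ceiling_unique)
  have split: "real a / real m = real (a div m) + real (a mod m) / real m"
    using assms by (simp add: field_simps flip: of_nat_mult of_nat_add)
  have "real (a mod m) / real m < 1" using assms by simp
  then show "of_int (int (a div m) + of_bool (a mod m \<noteq> 0)) - 1 < real a / real m"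
    unfolding split using assms by (cases "a mod m = 0") auto
  show "real a / real m \<le> of_int (int (a div m) + of_bool (a mod m \<noteq> 0))"
    unfolding split using assms by (cases "a mod m = 0") auto
qed

lemma ceiling_diff_of_nat_divide_iff:
  assumes "m > 0" and "a \<le> b"
  shows "\<lceil>real b / real m\<rceil> - \<lceil>real a / real m\<rceil> = \<lceil>real (b - a) / real m\<rceil> \<longleftrightarrow>
    (a mod m > b mod m \<and> b mod m > 0) \<or> (a mod m = 0 \<and> b mod m = (b - a) mod m)
     \<or> (b mod m = a mod m \<and> a mod m > 0 \<and> (b - a) mod m = 0)"
proof -
  define ra rb rd where "ra = a mod m" "rb = b mod m" "rd = (b - a) mod m"
  define carry where "carry = (ra + rd) div m"
  have "b = a + (b - a)" using assms(2) by simp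
  then have div: "b div m = a div m + (b - a) div m + carry" and "rb = (ra + rd) mod m"
    unfolding carry_def ra_rb_rd_def by (metis div_add1_eq, metis mod_add_eq)
  then have carry: "ra + rd = rb + m * carry"
    unfolding carry_def by simp
  have rem: "ra < m" "rb < m" "rd < m" unfolding ra_rb_rd_def using assms(1) by simp_all
  then have "carry < 2" unfolding carry_def by (simp add: div_less_iff_less_mult)
  then consider "carry = 0" | "carry = 1" by linarith
  then show ?thesis
    unfolding ceiling_of_nat_divide[OF assms(1)] div ra_rb_rd_def[symmetric]
    by cases (use carry rem in auto)
qed

lemma sum_nth_shifted_eq_sum_list:
  "(\<Sum>k=1..length xs. real (xs ! (k - 1))) = real (sum_list xs)"
  by (simp add: sum_list_sum_nth sum.atLeast1_atMost_eq atLeast0LessThan)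

lemma gen_combination_apply:
  "(\<Sum>i=1..length lam. \<gamma> i * gen_e i k) + \<gamma> (length lam + 1) * gen_lam lam k =
   (if k = 0 then (\<Sum>i=1..length lam. \<gamma> i) + \<gamma> (length lam + 1)
    else if k \<le> length lam then \<gamma> k + \<gamma> (length lam + 1) * real (lam ! (k - 1)) else 0)"
proof (cases "k = 0")
  case False
  then have "(\<Sum>i=1..length lam. \<gamma> i * gen_e i k) = (\<Sum>i=1..length lam. if k = i then \<gamma> i else 0)"
    by (intro sum.cong) (auto simp: gen_e_def)
  with False show ?thesis by (auto simp: gen_lam_def)
qed (simp add: gen_e_def gen_lam_def)

lemma mem_fund_pp_iff:
  "x \<in> fund_pp lam \<longleftrightarrow> (\<forall>k > length lam. x k = 0) \<and>
    (\<exists>c. 0 \<le> c \<and> c < 1 \<and>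
      (\<forall>k\<in>{1..length lam}.
        0 \<le> x k - c * real (lam ! (k - 1)) \<and> x k - c * real (lam ! (k - 1)) < 1) \<and>
      x 0 = (\<Sum>k=1..length lam. x k) - c * (real (sum_list lam) - 1))"
  (is "_ \<longleftrightarrow> ?beyond \<and> (\<exists>c. ?par c)")
proof -
  have sum_offsets: "(\<Sum>k=1..length lam. x k - c * real (lam ! (k - 1))) + c
      = (\<Sum>k=1..length lam. x k) - c * (real (sum_list lam) - 1)" for c
    by (simp add: sum_subtractf flip: sum_distrib_left sum_nth_shifted_eq_sum_list)
      (simp add: algebra_simps)
  show ?thesis
  proof
    assume "x \<in> fund_pp lam"
    then obtain \<gamma> where \<gamma>: "\<forall>i\<in>{1..length lam + 1}. 0 \<le> \<gamma> i \<and> \<gamma> i < 1"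
      and x: "\<And>k. x k = (if k = 0 then (\<Sum>i=1..length lam. \<gamma> i) + \<gamma> (length lam + 1)
         else if k \<le> length lam then \<gamma> k + \<gamma> (length lam + 1) * real (lam ! (k - 1)) else 0)"
      unfolding fund_pp_def gen_combination_apply by auto
    define c where "c = \<gamma> (length lam + 1)"
    have \<gamma>_coord: "\<gamma> k = x k - c * real (lam ! (k - 1))" if "k \<in> {1..length lam}" for k
      using that x[of k] by (simp add: c_def)
    have "?par c"
    proof (intro conjI)
      show "0 \<le> c" "c < 1" using \<gamma> by (simp_all add: c_def)
      show "\<forall>k\<in>{1..length lam}. 0 \<le> x k - c * real (lam ! (k - 1)) \<and> x k - c * real (lam ! (k - 1)) < 1"
      proof
        fix k assume k: "k \<in> {1..length lam}"
        then have "0 \<le> \<gamma> k \<and> \<gamma> k < 1" using \<gamma> by simp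
        then show "0 \<le> x k - c * real (lam ! (k - 1)) \<and> x k - c * real (lam ! (k - 1)) < 1"
          unfolding \<gamma>_coord[OF k] .
      qed
      have "x 0 = (\<Sum>k=1..length lam. \<gamma> k) + c" using x[of 0] by (simp add: c_def)
      also have "\<dots> = (\<Sum>k=1..length lam. x k - c * real (lam ! (k - 1))) + c"
        by (simp add: \<gamma>_coord)
      finally show "x 0 = (\<Sum>k=1..length lam. x k) - c * (real (sum_list lam) - 1)"
        unfolding sum_offsets .
    qed
    moreover have ?beyond using x by simp
    ultimately show "?beyond \<and> (\<exists>c. ?par c)" by blast
  next
    assume "?beyond \<and> (\<exists>c. ?par c)"
    then obtain c where beyond: ?beyond and par: "?par c" by blast
    define \<gamma> where "\<gamma> t = (if t \<le> length lam then x t - c * real (lam ! (t - 1)) else c)" for t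
    have "\<forall>i\<in>{1..length lam + 1}. 0 \<le> \<gamma> i \<and> \<gamma> i < 1"
      using par by (auto simp: \<gamma>_def)
    moreover have "x k = (\<Sum>i=1..length lam. \<gamma> i * gen_e i k) + \<gamma> (length lam + 1) * gen_lam lam k" for k
      using par beyond sum_offsets[of c] unfolding gen_combination_apply
      by (auto simp: \<gamma>_def intro!: sum.cong)
    ultimately show "x \<in> fund_pp lam" unfolding fund_pp_def by blast
  qed
qed

lemma p_pt_coord:
  "k \<in> {1..length lam} \<Longrightarrow>
    p_pt lam b k = of_int \<lceil>real (b * lam ! (k - 1)) / real (sum_list lam - 1)\<rceil>"
  by (simp add: p_pt_def Let_def)

lemma p_pt_beyond: "length lam < k \<Longrightarrow> p_pt lam b k = 0"
  by (simp add: p_pt_def Let_def)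

lemma p_pt_0: "p_pt lam b 0 = (\<Sum>k=1..length lam. p_pt lam b k) - real b"
  by (simp add: p_pt_def Let_def)

lemma p_pt_eqI:
  assumes "\<And>k. k \<in> {1..length lam} \<Longrightarrow> x k = p_pt lam b k"
    and "\<And>k. length lam < k \<Longrightarrow> x k = 0"
    and "x 0 = (\<Sum>k=1..length lam. x k) - real b"
  shows "x = p_pt lam b"
proof
  fix k
  consider "k = 0" | "k \<in> {1..length lam}" | "length lam < k" by force
  then show "x k = p_pt lam b k"
    by cases (use assms p_pt_beyond in \<open>simp_all add: p_pt_0\<close>)
qed

lemma p_pt_mem_fund_pp_lattice:
  assumes "b < sum_list lam - 1"
  shows "p_pt lam b \<in> fund_pp_lattice lam"
proof -
  define m where "m = sum_list lam - 1"
  define c where "c = real b / real m"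
  have m: "m > 0" "real (sum_list lam) - 1 = real m" using assms by (auto simp: m_def)
  have coord: "p_pt lam b k = of_int \<lceil>c * real (lam ! (k - 1))\<rceil>" if "k \<in> {1..length lam}" for k
    using p_pt_coord[OF that] by (simp add: c_def m_def)
  have "p_pt lam b k \<in> \<int>" for k
  proof -
    consider "k = 0" | "k \<in> {1..length lam}" | "length lam < k" by force
    then show ?thesis
      by cases (simp_all add: p_pt_0 coord p_pt_beyond Ints_diff Ints_sum)
  qed
  moreover have "p_pt lam b \<in> fund_pp lam"
    unfolding mem_fund_pp_iff
  proof (intro conjI exI allI impI ballI)
    show "0 \<le> c" "c < 1" using assms m(1) by (simp_all add: c_def m_def)
    show "p_pt lam b 0 = (\<Sum>k=1..length lam. p_pt lam b k) - c * (real (sum_list lam) - 1)"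
      using m by (simp add: p_pt_0 c_def)
    fix k
    show "length lam < k \<Longrightarrow> p_pt lam b k = 0" by (rule p_pt_beyond)
    assume k: "k \<in> {1..length lam}"
    show "0 \<le> p_pt lam b k - c * real (lam ! (k - 1))"
      unfolding coord[OF k] using le_of_int_ceiling[of "c * real (lam ! (k - 1))"] by linarith
    show "p_pt lam b k - c * real (lam ! (k - 1)) < 1"
      unfolding coord[OF k] using ceiling_correct[of "c * real (lam ! (k - 1))"] by linarith
  qed
  ultimately show ?thesis by (simp add: fund_pp_lattice_def)
qed

lemma fund_pp_lattice_eq_p_pt_image:
  assumes "1 < sum_list lam"
  shows "fund_pp_lattice lam = p_pt lam ` {..<sum_list lam - 1}"
proof
  show "p_pt lam ` {..<sum_list lam - 1} \<subseteq> fund_pp_lattice lam"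
    using p_pt_mem_fund_pp_lattice by blast
  show "fund_pp_lattice lam \<subseteq> p_pt lam ` {..<sum_list lam - 1}"
  proof
    fix x assume x: "x \<in> fund_pp_lattice lam"
    define m where "m = sum_list lam - 1"
    have m: "m > 0" "real (sum_list lam) - 1 = real m" using assms by (auto simp: m_def)
    from x obtain c where "0 \<le> c" "c < 1" and beyond: "\<And>k. length lam < k \<Longrightarrow> x k = 0"
      and offset: "\<And>k. k \<in> {1..length lam} \<Longrightarrow>
          0 \<le> x k - c * real (lam ! (k - 1)) \<and> x k - c * real (lam ! (k - 1)) < 1"
      and x0: "x 0 = (\<Sum>k=1..length lam. x k) - c * real m"
      unfolding fund_pp_lattice_def mem_fund_pp_iff m(2) by blast
    have int: "x k \<in> \<int>" for k using x by (simp add: fund_pp_lattice_def)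
    have "c * real m = (\<Sum>k=1..length lam. x k) - x 0" using x0 by simp
    also have "\<dots> \<in> \<int>" using int by (intro Ints_diff Ints_sum)
    finally obtain z where z: "c * real m = of_int z" by (elim Ints_cases)
    have "0 \<le> c * real m" "c * real m < real m" using \<open>0 \<le> c\<close> \<open>c < 1\<close> m(1) by simp_all
    then obtain b where b: "b < m" "c * real m = real b" unfolding z
      by (metis nat_less_iff of_int_0_le_iff of_int_less_iff of_int_of_nat_eq int_nat_eq)
    have "x = p_pt lam b"
    proof (rule p_pt_eqI)
      fix k assume k: "k \<in> {1..length lam}"
      obtain zk where zk: "x k = of_int zk" using int[of k] by (elim Ints_cases)
      have "real (b * lam ! (k - 1)) / real (sum_list lam - 1)
          = c * real m * real (lam ! (k - 1)) / real m"
        unfolding m_def[symmetric] by (simp add: b(2))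
      also have "\<dots> = c * real (lam ! (k - 1))" using m(1) by simp
      moreover
      have "\<lceil>c * real (lam ! (k - 1))\<rceil> = zk"
        using offset[OF k] unfolding zk by (intro ceiling_unique) linarith+
      ultimately show "x k = p_pt lam b k"
        by (simp add: p_pt_coord[OF k] zk)
    next
      show "x 0 = (\<Sum>k=1..length lam. x k) - real b" using x0 b(2) by simp
    qed (rule beyond)
    with b(1) show "x \<in> p_pt lam ` {..<sum_list lam - 1}" by (auto simp: m_def)
  qed
qed

lemma p_pt_diff_eq_p_pt_iff:
  "(\<lambda>k. p_pt lam j k - p_pt lam i k) = p_pt lam b \<longleftrightarrow>
    i \<le> j \<and> b = j - i \<and> (\<forall>t\<in>{1..length lam}. p_pt lam j t - p_pt lam i t = p_pt lam (j - i) t)"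
proof
  assume "(\<lambda>k. p_pt lam j k - p_pt lam i k) = p_pt lam b"
  then have coords: "p_pt lam j k - p_pt lam i k = p_pt lam b k" for k by (simp add: fun_eq_iff)
  then have "(\<Sum>k=1..length lam. p_pt lam j k - p_pt lam i k) = (\<Sum>k=1..length lam. p_pt lam b k)"
    by simp
  moreover note coords[of 0]
  ultimately have "real j - real i = real b" by (simp add: p_pt_0 sum_subtractf)
  then have "i \<le> j" "b = j - i" by linarith+
  with coords show "i \<le> j \<and> b = j - i \<and> (\<forall>t\<in>{1..length lam}. p_pt lam j t - p_pt lam i t = p_pt lam (j - i) t)"
    by simp
next
  assume "i \<le> j \<and> b = j - i \<and> (\<forall>t\<in>{1..length lam}. p_pt lam j t - p_pt lam i t = p_pt lam (j - i) t)"
  then have ij: "i \<le> j" and b: "b = j - i"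
    and coords: "\<And>t. t \<in> {1..length lam} \<Longrightarrow> p_pt lam j t - p_pt lam i t = p_pt lam b t"
    by auto
  show "(\<lambda>k. p_pt lam j k - p_pt lam i k) = p_pt lam b"
  proof (rule p_pt_eqI)
    show "p_pt lam j 0 - p_pt lam i 0 = (\<Sum>k=1..length lam. p_pt lam j k - p_pt lam i k) - real b"
      using ij b by (simp add: p_pt_0 sum_subtractf)
  qed (simp_all add: coords p_pt_beyond)
qed

lemma p_pt_coord_diff_eq_iff:
  assumes "1 < sum_list lam" and "i \<le> j" and t: "t \<in> {1..length lam}"
  shows "p_pt lam j t - p_pt lam i t = p_pt lam (j - i) t \<longleftrightarrow>
    (s_rem lam t i > s_rem lam t j \<and> s_rem lam t j > 0)
      \<or> (s_rem lam t i = 0 \<and> s_rem lam t j = s_rem lam t (j - i))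
      \<or> (s_rem lam t j = s_rem lam t i \<and> s_rem lam t i > 0 \<and> s_rem lam t (j - i) = 0)"
    (is "_ \<longleftrightarrow> ?remainders")
proof -
  let ?l = "lam ! (t - 1)" and ?m = "sum_list lam - 1"
  have "p_pt lam j t - p_pt lam i t = p_pt lam (j - i) t \<longleftrightarrow>
      \<lceil>real (j * ?l) / real ?m\<rceil> - \<lceil>real (i * ?l) / real ?m\<rceil> = \<lceil>real (j * ?l - i * ?l) / real ?m\<rceil>"
    unfolding p_pt_coord[OF t] diff_mult_distrib by (simp flip: of_int_diff)
  also have "\<dots> \<longleftrightarrow> ?remainders"
    unfolding s_rem_def diff_mult_distrib using assms(1,2)
    by (intro ceiling_diff_of_nat_divide_iff) simp_all
  finally show ?thesis .
qed

theorem theorem2p17: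
  fixes lam :: "nat list" and n i j :: nat
  assumes "n \<ge> 2" and "is_partition lam n"
    and "i < n - 1" and "j < n - 1" and "i \<noteq> j"
  shows "P_le lam (p_pt lam i) (p_pt lam j) \<longleftrightarrow>
    (i < j \<and> (\<forall>t\<in>{1..length lam}.
        (s_rem lam t i > s_rem lam t j \<and> s_rem lam t j > 0)
      \<or> (s_rem lam t i = 0 \<and> s_rem lam t j = s_rem lam t (j - i))
      \<or> (s_rem lam t j = s_rem lam t i \<and> s_rem lam t i > 0 \<and> s_rem lam t (j - i) = 0)))"
    (is "_ \<longleftrightarrow> i < j \<and> (\<forall>t\<in>{1..length lam}. ?remainders t)")
proof -
  have sum: "sum_list lam = n" using assms(2) by (simp add: is_partition_def)
  then have lattice: "fund_pp_lattice lam = p_pt lam ` {..<n - 1}"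
    using fund_pp_lattice_eq_p_pt_image[of lam] assms(1) by simp
  have "P_le lam (p_pt lam i) (p_pt lam j) \<longleftrightarrow>
      (\<exists>b<n - 1. (\<lambda>k. p_pt lam j k - p_pt lam i k) = p_pt lam b)"
    unfolding P_le_def lattice using assms(3,4) by blast
  also have "\<dots> \<longleftrightarrow> i < j \<and>
      (\<forall>t\<in>{1..length lam}. p_pt lam j t - p_pt lam i t = p_pt lam (j - i) t)"
    unfolding p_pt_diff_eq_p_pt_iff using assms(4,5) by auto
  also have "\<dots> \<longleftrightarrow> i < j \<and> (\<forall>t\<in>{1..length lam}. ?remainders t)"
    using p_pt_coord_diff_eq_iff[of lam i j] assms(1) sum by auto
  finally show ?thesis .
qed

end
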